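(* Let $\rho\in\mathcal B_+(A_0A_1)$. Then there exist $V\in\mathcal B(A_0)$ with ${\rm Tr}[VV^*]=1$ and $G\in\mathcal B_+(A_0A_1)$ such that $\rho=(\chi_V\otimes\mathrm{id}_{A_1})(G)$ and $\|G\|=\|\rho\|^\diamond_{A_1|A_0}$, where $\chi_V(X)=VXV^*$ and $\|G\|$ is the operator norm.
   Context: For finite-dimensional $\mathcal H_{A_0},\mathcal H_{A_1}$ and $\rho\in\mathcal B_+(A_0A_1)$, $\|\rho\|^\diamond_{A_1|A_0}=\min\{\lambda>0:\rho\le\lambda\,\sigma\otimes I_{A_1}\text{ for some state }\sigma\in\mathfrak S(A_0)\}$ (equal to $2^{-H_{\min}(A_1|A_0)_\rho}$). *)

theory Defs
  imports "HOL-Analysis.Analysis"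
begin

text \<open>Operators on finite-dimensional complex Hilbert spaces are represented as
square complex matrices indexed by a finite type; the composite system A0A1 is
indexed by the product type of the two index types.\<close>

type_synonym 'n cmat = "complex ^ 'n ^ 'n"

definition adj :: "'n::finite cmat \<Rightarrow> 'n cmat" where
  "adj A = (\<chi> i j. cnj (A $ j $ i))"

definition tr :: "'n::finite cmat \<Rightarrow> complex" where
  "tr A = (\<Sum>i\<in>UNIV. A $ i $ i)"

definition psd :: "'n::finite cmat \<Rightarrow> bool" where
  "psd A \<longleftrightarrow> (\<forall>v :: complex ^ 'n.
      let q = (\<Sum>i\<in>UNIV. cnj (v $ i) * (A *v v) $ i) in Im q = 0 \<and> Re q \<ge> 0)"

definition loewner_le :: "'n::finite cmat \<Rightarrow> 'n cmat \<Rightarrow> bool" where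
  "loewner_le A B \<longleftrightarrow> psd (B - A)"

definition is_state :: "'n::finite cmat \<Rightarrow> bool" where
  "is_state \<sigma> \<longleftrightarrow> psd \<sigma> \<and> tr \<sigma> = 1"

definition kron :: "'a::finite cmat \<Rightarrow> 'b::finite cmat \<Rightarrow> ('a \<times> 'b) cmat" where
  "kron A B = (\<chi> p q. A $ fst p $ fst q * B $ snd p $ snd q)"

definition conj_tensor_id :: "'a::finite cmat \<Rightarrow> ('a \<times> 'b::finite) cmat \<Rightarrow> ('a \<times> 'b) cmat" where
  "conj_tensor_id V G = kron V (mat 1) ** G ** adj (kron V (mat 1))"

definition op_norm :: "'n::finite cmat \<Rightarrow> real" where
  "op_norm A = onorm (\<lambda>x. A *v x)"

text \<open>\<open>\<parallel>\<rho>\<parallel>^\<diamond>_{A1|A0} = min{\<lambda>>0 : \<rho> \<le> \<lambda> \<sigma>\<otimes>I, \<sigma> a state}\<close>, written as an infimum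
(it is attained whenever \<rho> \<noteq> 0; for \<rho> = 0 the infimum is 0).\<close>
definition cond_diamond_norm :: "('a::finite \<times> 'b::finite) cmat \<Rightarrow> real" where
  "cond_diamond_norm \<rho> = Inf {t::real. t > 0 \<and>
      (\<exists>\<sigma> :: 'a cmat. is_state \<sigma> \<and> loewner_le \<rho> (t *\<^sub>R kron \<sigma> (mat 1 :: 'b cmat)))}"

end

theory Submission
  imports Defs
begin

(* If rho <= t (sigma (x) I) for a state sigma, perturb sigma to the invertible state
   P = (sigma + (eps/d) I) / (1 + eps) and factor P = W (adj W) (Cholesky).  Then
   G = (W^-1 (x) I) rho (adj W^-1 (x) I) satisfies rho = (W (x) I) G (adj W (x) I),
   tr (W (adj W)) = 1 and ||G|| <= (1 + eps) t.  Conversely, every factorisation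
   rho = (V (x) I) G (adj V (x) I) with tr (V (adj V)) = 1 is feasible for the diamond norm
   with sigma = V (adj V) and any t > ||G||, so ||G|| is never below the infimum.  Letting t
   tend to the infimum and eps to 0, the factorisations stay in a compact set (||V|| = 1,
   ||G|| bounded), and a limit point attains the infimum. *)

section \<open>Quadratic forms, adjoints and Kronecker products\<close>

definition cinner :: "complex ^ 'n \<Rightarrow> complex ^ 'n \<Rightarrow> complex" where
  "cinner v w = (\<Sum>i\<in>UNIV. cnj (v $ i) * w $ i)"

definition quad_form :: "'n::finite cmat \<Rightarrow> complex ^ 'n \<Rightarrow> complex" where
  "quad_form A v = cinner v (A *v v)"

lemma Re_cinner: "Re (cinner v w) = inner v w"
  by (simp add: cinner_def inner_vec_def inner_complex_def Re_sum)

lemma cinner_self: "cinner v v = of_real ((norm v)\<^sup>2)"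
proof -
  have "cinner v v = (\<Sum>i\<in>UNIV. of_real ((cmod (v $ i))\<^sup>2))"
    unfolding cinner_def
    by (rule sum.cong) (simp_all add: mult.commute flip: complex_norm_square)
  also have "\<dots> = of_real ((norm v)\<^sup>2)"
    unfolding norm_vec_def L2_set_def by (simp add: sum_nonneg)
  finally show ?thesis .
qed

lemma cinner_add_left: "cinner (u + v) w = cinner u w + cinner v w"
  by (simp add: cinner_def distrib_right sum.distrib)

lemma cinner_add_right: "cinner u (v + w) = cinner u v + cinner u w"
  by (simp add: cinner_def distrib_left sum.distrib)

lemma cinner_axis_left: "cinner (axis i a) w = cnj a * w $ i"
  unfolding cinner_def axis_def
  by (simp add: if_distrib[of cnj] if_distrib[of "\<lambda>x. x * _"] cong: if_cong)

lemma cinner_adj: "cinner v (A *v w) = cinner (adj A *v v) w"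
  unfolding cinner_def adj_def matrix_vector_mult_def
  by (simp add: sum_distrib_left sum_distrib_right, subst sum.swap, simp add: mult_ac)

lemma adj_adj [simp]: "adj (adj A) = A"
  by (simp add: adj_def vec_eq_iff)

lemma adj_matrix_mult: "adj (A ** B) = adj B ** adj A"
  by (simp add: adj_def vec_eq_iff matrix_matrix_mult_def mult.commute)

lemma adj_add: "adj (A + B) = adj A + adj B"
  by (simp add: adj_def vec_eq_iff)

lemma adj_scaleR: "adj (c *\<^sub>R A) = c *\<^sub>R adj A"
  by (simp add: adj_def vec_eq_iff)

lemma adj_mat_1 [simp]: "adj (mat 1) = mat 1"
  by (simp add: adj_def vec_eq_iff mat_def)

lemma scaleR_matrix_vector_mult: "((c *\<^sub>R A) :: 'n::finite cmat) *v x = c *\<^sub>R (A *v x)"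
  by (simp add: matrix_vector_mult_def vec_eq_iff)
    (simp add: scaleR_conv_of_real sum_distrib_left mult.assoc)

lemma matrix_vector_mult_axis: "(A *v axis j c) $ i = A $ i $ j * c"
  unfolding matrix_vector_mult_def axis_def
  by (simp add: if_distrib[of "\<lambda>x. A $ i $ _ * x"] cong: if_cong)

lemma quad_form_eq_sum: "quad_form A v = (\<Sum>i\<in>UNIV. \<Sum>j\<in>UNIV. cnj (v $ i) * A $ i $ j * v $ j)"
  by (simp add: quad_form_def cinner_def matrix_vector_mult_def sum_distrib_left mult.assoc)

lemma Re_quad_form: "Re (quad_form A v) = inner v (A *v v)"
  by (simp add: quad_form_def Re_cinner)

lemma quad_form_add: "quad_form (A + B) v = quad_form A v + quad_form B v"
  by (simp add: quad_form_def cinner_def matrix_vector_mult_add_rdistrib distrib_left sum.distrib)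

lemma quad_form_diff: "quad_form (A - B) v = quad_form A v - quad_form B v"
  by (simp add: quad_form_def cinner_def matrix_vector_mult_diff_rdistrib right_diff_distrib sum_subtractf)

lemma quad_form_scaleR: "quad_form (c *\<^sub>R A) v = of_real c * quad_form A v"
  by (simp add: quad_form_def cinner_def scaleR_matrix_vector_mult)
    (simp add: scaleR_conv_of_real sum_distrib_left mult.left_commute)

lemma quad_form_mat_1: "quad_form (mat 1) v = of_real ((norm v)\<^sup>2)"
  by (simp add: quad_form_def cinner_self)

lemma quad_form_congruence: "quad_form (M ** A ** adj M) v = quad_form A (adj M *v v)"
  by (simp add: quad_form_def cinner_adj matrix_vector_mul_assoc[symmetric])

lemma quad_form_gram: "quad_form (W ** adj W) v = of_real ((norm (adj W *v v))\<^sup>2)"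
  using quad_form_congruence[of W "mat 1"] by (simp add: quad_form_mat_1)

lemma quad_form_axis_add_axis:
  "quad_form A (axis i a + axis j c) =
     cnj a * A $ i $ i * a + cnj a * A $ i $ j * c + cnj c * A $ j $ i * a + cnj c * A $ j $ j * c"
  by (simp add: quad_form_def matrix_vector_right_distrib cinner_add_left cinner_add_right
      cinner_axis_left matrix_vector_mult_axis mult.assoc)

lemma psd_iff_quad_form: "psd A \<longleftrightarrow> (\<forall>v. Im (quad_form A v) = 0 \<and> Re (quad_form A v) \<ge> 0)"
  by (simp add: psd_def quad_form_def cinner_def Let_def)

lemma psd_congruence: "psd A \<Longrightarrow> psd (M ** A ** adj M)"
  by (simp add: psd_iff_quad_form quad_form_congruence)

lemma psd_gram: "psd (W ** adj W)"
  by (simp add: psd_iff_quad_form quad_form_gram)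

lemma psd_add: "psd A \<Longrightarrow> psd B \<Longrightarrow> psd (A + B)"
  by (simp add: psd_iff_quad_form quad_form_add)

lemma psd_scaleR: "0 \<le> c \<Longrightarrow> psd A \<Longrightarrow> psd (c *\<^sub>R A)"
  by (simp add: psd_iff_quad_form quad_form_scaleR)

lemma psd_mat_1: "psd (mat 1)"
  by (simp add: psd_iff_quad_form quad_form_mat_1)

lemma psd_hermitian:
  assumes "psd A"
  shows "adj A = A"
proof -
  have Im_eq_0: "Im (quad_form A v) = 0" for v
    using assms by (simp add: psd_iff_quad_form)
  have "cnj (A $ j $ i) = A $ i $ j" for i j
  proof -
    have diag: "Im (A $ i $ i) = 0" "Im (A $ j $ j) = 0"
      using Im_eq_0[of "axis i 1 + axis i 0"] Im_eq_0[of "axis j 1 + axis j 0"]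
      by (simp_all add: quad_form_axis_add_axis)
    have "Im (A $ i $ j) + Im (A $ j $ i) = 0"
      using Im_eq_0[of "axis i 1 + axis j 1"] diag by (simp add: quad_form_axis_add_axis)
    moreover have "Re (A $ i $ j) - Re (A $ j $ i) = 0"
      using Im_eq_0[of "axis i 1 + axis j \<i>"] diag by (simp add: quad_form_axis_add_axis)
    ultimately show ?thesis
      by (simp add: complex_eq_iff)
  qed
  then show ?thesis by (simp add: adj_def vec_eq_iff)
qed

lemma tr_add: "tr (A + B) = tr A + tr B"
  by (simp add: tr_def sum.distrib)

lemma tr_scaleR: "tr (c *\<^sub>R A) = of_real c * tr A"
  by (simp add: tr_def) (simp add: sum_distrib_left scaleR_conv_of_real)

lemma tr_mat_1: "tr (mat 1 :: 'n::finite cmat) = of_nat CARD('n)"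
  by (simp add: tr_def mat_def)

lemma tr_gram: "tr (W ** adj W) = of_real ((norm W)\<^sup>2)"
proof -
  have "tr (W ** adj W) = (\<Sum>i\<in>UNIV. cinner (W $ i) (W $ i))"
    unfolding tr_def cinner_def matrix_matrix_mult_def adj_def by (simp add: mult.commute)
  also have "\<dots> = of_real (\<Sum>i\<in>UNIV. (norm (W $ i))\<^sup>2)"
    by (simp add: cinner_self)
  also have "(\<Sum>i\<in>UNIV. (norm (W $ i))\<^sup>2) = (norm W)\<^sup>2"
    unfolding norm_vec_def L2_set_def by (simp add: sum_nonneg)
  finally show ?thesis .
qed

lemma kron_mult: "kron A B ** kron C D = kron (A ** C) (B ** D)"
  unfolding kron_def matrix_matrix_mult_def
  by (simp add: vec_eq_iff UNIV_Times_UNIV[symmetric] sum_product sum.cartesian_product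
      split_def mult_ac del: UNIV_Times_UNIV)

lemma adj_kron: "adj (kron A B) = kron (adj A) (adj B)"
  by (simp add: adj_def kron_def vec_eq_iff)

lemma kron_mat_1: "kron (mat 1) (mat 1) = mat 1"
  by (simp add: kron_def mat_def vec_eq_iff prod_eq_iff)

lemma kron_add_left: "kron (A + B) C = kron A C + kron B C"
  by (simp add: kron_def vec_eq_iff distrib_right)

lemma kron_scaleR_left: "kron (c *\<^sub>R A) B = c *\<^sub>R kron A B"
  by (simp add: kron_def vec_eq_iff)

section \<open>Cholesky factorisation\<close>

text \<open>The Cholesky factorisation is proved by induction on the index set, so during the
  induction matrices are functions restricted to a finite set \<open>S\<close>.\<close>

definition hermitian_on :: "'n set \<Rightarrow> ('n \<Rightarrow> 'n \<Rightarrow> complex) \<Rightarrow> bool" where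
  "hermitian_on S A \<longleftrightarrow> (\<forall>i\<in>S. \<forall>j\<in>S. cnj (A i j) = A j i)"

definition pos_def_on :: "'n set \<Rightarrow> ('n \<Rightarrow> 'n \<Rightarrow> complex) \<Rightarrow> bool" where
  "pos_def_on S A \<longleftrightarrow>
     (\<forall>v. (\<exists>i\<in>S. v i \<noteq> 0) \<longrightarrow> Re (\<Sum>i\<in>S. \<Sum>j\<in>S. cnj (v i) * A i j * v j) > 0)"

lemma pos_def_onD:
  "pos_def_on S A \<Longrightarrow> \<exists>i\<in>S. v i \<noteq> 0 \<Longrightarrow> Re (\<Sum>i\<in>S. \<Sum>j\<in>S. cnj (v i) * A i j * v j) > 0"
  by (simp add: pos_def_on_def)

lemma pos_def_on_diag:
  assumes "pos_def_on S A" "finite S" "k \<in> S"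
  shows "Re (A k k) > 0"
proof -
  let ?e = "\<lambda>l. if l = k then 1 else 0 :: complex"
  have "\<exists>i\<in>S. ?e i \<noteq> 0"
    using assms(3) by auto
  then have "Re (\<Sum>i\<in>S. \<Sum>j\<in>S. cnj (?e i) * A i j * ?e j) > 0"
    by (rule pos_def_onD[OF assms(1)])
  moreover have "(\<Sum>i\<in>S. \<Sum>j\<in>S. cnj (?e i) * A i j * ?e j) = A k k"
    using assms(2,3)
    by (simp add: if_distrib[of cnj] if_distrib[of "times _"] if_distrib[of "\<lambda>x. x * _"]
        cong: if_cong)
  ultimately show ?thesis by simp
qed

lemma hermitian_on_schur_complement:
  assumes "hermitian_on (insert k S) A"
  shows "hermitian_on S (\<lambda>i j. A i j - A i k * A k j / A k k)"
  using assms unfolding hermitian_on_def by (simp add: mult.commute)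

text \<open>Eliminating the \<open>k\<close>-th coordinate: the vector \<open>v\<close> on \<open>S\<close>, extended by
  \<open>v k = - (\<Sum>j\<in>S. A k j * v j) / A k k\<close>, has the same \<open>A\<close>-energy as \<open>v\<close> has for the
  Schur complement.\<close>
lemma pos_def_on_schur_complement:
  assumes "finite S" "k \<notin> S" "hermitian_on (insert k S) A" "pos_def_on (insert k S) A"
  shows "pos_def_on S (\<lambda>i j. A i j - A i k * A k j / A k k)"
  unfolding pos_def_on_def
proof (intro allI impI)
  fix v :: "_ \<Rightarrow> complex"
  assume v: "\<exists>i\<in>S. v i \<noteq> 0"
  let ?T = "insert k S"
  define a where "a = A k k"
  define c where "c = (\<Sum>j\<in>S. A k j * v j)"
  define Q where "Q = (\<Sum>i\<in>S. \<Sum>j\<in>S. cnj (v i) * A i j * v j)"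
  define w where "w = v(k := - c / a)"
  have cnj_A: "cnj (A i j) = A j i" if "i \<in> ?T" "j \<in> ?T" for i j
    using assms(3) that unfolding hermitian_on_def by blast
  have a_real: "cnj a = a" and a_nz: "a \<noteq> 0"
    using cnj_A[of k k] pos_def_on_diag[OF assms(4)] assms(1) unfolding a_def by force+
  have w_S: "w i = v i" if "i \<in> S" for i
    using assms(2) that unfolding w_def by auto
  define d where "d = (\<Sum>i\<in>S. cnj (v i) * A i k)"
  have d_eq: "d = cnj c"
    unfolding c_def d_def cnj_sum by (rule sum.cong) (auto simp: cnj_A mult.commute)
  have "(\<Sum>i\<in>?T. \<Sum>j\<in>?T. cnj (w i) * A i j * w j)
      = cnj (w k) * a * w k + cnj (w k) * c + d * w k + Q"
    using assms(1,2) w_S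
    by (simp add: a_def c_def d_def Q_def sum.distrib sum_distrib_left sum_distrib_right mult.assoc)
  also have "\<dots> = Q - cnj c * c / a"
    using a_nz by (simp add: w_def d_eq a_real)
  also have "\<dots> = (\<Sum>i\<in>S. \<Sum>j\<in>S. cnj (v i) * (A i j - A i k * A k j / A k k) * v j)"
    unfolding Q_def a_def d_eq[symmetric] unfolding c_def d_def
    by (simp add: right_diff_distrib left_diff_distrib sum_subtractf sum_distrib_left
        sum_distrib_right sum_divide_distrib mult_ac)
  finally have "(\<Sum>i\<in>?T. \<Sum>j\<in>?T. cnj (w i) * A i j * w j) = \<dots>" .
  moreover have "\<exists>i\<in>?T. w i \<noteq> 0"
    using v w_S by auto
  ultimately show "Re (\<Sum>i\<in>S. \<Sum>j\<in>S. cnj (v i) * (A i j - A i k * A k j / A k k) * v j) > 0"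
    using pos_def_onD[OF assms(4), of w] by simp
qed

lemma cholesky_on:
  assumes "finite S" "hermitian_on S A" "pos_def_on S A"
  shows "\<exists>L. \<forall>i\<in>S. \<forall>j\<in>S. A i j = (\<Sum>m\<in>S. L i m * cnj (L j m))"
  using assms
proof (induction S arbitrary: A rule: finite_induct)
  case empty
  then show ?case by simp
next
  case (insert k S)
  let ?T = "insert k S"
  have cnj_A: "cnj (A i j) = A j i" if "i \<in> ?T" "j \<in> ?T" for i j
    using insert.prems(1) that unfolding hermitian_on_def by blast
  define r where "r = complex_of_real (sqrt (Re (A k k)))"
  have "Re (A k k) > 0"
    using pos_def_on_diag[OF insert.prems(2)] insert.hyps(1) by simp
  then have A_kk: "A k k = r * cnj r" and r_nz: "r \<noteq> 0"
    using cnj_A[of k k] by (auto simp: r_def complex_eq_iff simp flip: of_real_mult)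
  obtain L' where L': "\<forall>i\<in>S. \<forall>j\<in>S. A i j - A i k * A k j / A k k = (\<Sum>m\<in>S. L' i m * cnj (L' j m))"
    using insert.IH hermitian_on_schur_complement[OF insert.prems(1)]
      pos_def_on_schur_complement[OF insert.hyps insert.prems] by blast
  define L where "L i m = (if m = k then A i k / cnj r else if i = k then 0 else L' i m)" for i m
  have "A i j = (\<Sum>m\<in>?T. L i m * cnj (L j m))" if "i \<in> ?T" "j \<in> ?T" for i j
  proof -
    have "(\<Sum>m\<in>?T. L i m * cnj (L j m)) = A i k * A k j / A k k + (\<Sum>m\<in>S. L i m * cnj (L j m))"
      using insert.hyps that r_nz by (simp add: L_def A_kk cnj_A)
    also have "(\<Sum>m\<in>S. L i m * cnj (L j m)) = (if i = k \<or> j = k then 0 else A i j - A i k * A k j / A k k)"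
      using insert.hyps that L' by (auto simp: L_def intro!: sum.neutral sum.cong)
    finally show ?thesis
      using that r_nz by (auto simp: A_kk)
  qed
  then show ?case by blast
qed

lemma pos_def_factorization:
  fixes P :: "'n::finite cmat"
  assumes herm: "adj P = P" and pos: "\<And>v. v \<noteq> 0 \<Longrightarrow> Re (quad_form P v) > 0"
  shows "\<exists>W. invertible W \<and> W ** adj W = P"
proof -
  have "hermitian_on UNIV (\<lambda>i j. P $ i $ j)"
    using herm unfolding hermitian_on_def adj_def by (simp add: vec_eq_iff)
  moreover have "pos_def_on UNIV (\<lambda>i j. P $ i $ j)"
    unfolding pos_def_on_def
  proof (intro allI impI)
    fix v :: "'n \<Rightarrow> complex"
    assume "\<exists>i\<in>UNIV. v i \<noteq> 0"
    then have "(\<chi> i. v i) \<noteq> 0" by (auto simp: vec_eq_iff)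
    then show "Re (\<Sum>i\<in>UNIV. \<Sum>j\<in>UNIV. cnj (v i) * P $ i $ j * v j) > 0"
      using pos[of "\<chi> i. v i"] by (simp add: quad_form_eq_sum)
  qed
  ultimately have "\<exists>L :: 'n \<Rightarrow> 'n \<Rightarrow> complex. \<forall>i j. P $ i $ j = (\<Sum>m\<in>UNIV. L i m * cnj (L j m))"
    using cholesky_on[of UNIV "\<lambda>i j. P $ i $ j"] by simp
  then obtain L :: "'n \<Rightarrow> 'n \<Rightarrow> complex" where L: "\<forall>i j. P $ i $ j = (\<Sum>m\<in>UNIV. L i m * cnj (L j m))" ..
  define W :: "'n cmat" where "W = (\<chi> i m. L i m)"
  have W: "W ** adj W = P"
    using L by (simp add: W_def adj_def matrix_matrix_mult_def vec_eq_iff)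
  have "\<exists>B. B ** adj W = mat 1"
    unfolding matrix_left_invertible_ker
  proof (intro allI impI)
    fix x
    assume "adj W *v x = 0"
    then have "quad_form P x = 0"
      by (simp add: W[symmetric] quad_form_gram)
    then show "x = 0"
      using pos[of x] by force
  qed
  then obtain B where "B ** adj W = mat 1" ..
  then have "W ** adj B = mat 1"
    by (metis adj_adj adj_mat_1 adj_matrix_mult)
  then show ?thesis
    using W by (auto simp: invertible_right_inverse)
qed

section \<open>Operator norm\<close>

lemma op_norm_nonneg: "0 \<le> op_norm A"
  unfolding op_norm_def by (rule onorm_pos_le[OF matrix_vector_mul_bounded_linear])

lemma norm_matrix_vector_mult_le_op_norm: "norm (A *v v) \<le> op_norm A * norm v"
  unfolding op_norm_def by (rule onorm[OF matrix_vector_mul_bounded_linear])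

lemma op_norm_le: "(\<And>v. norm (A *v v) \<le> c * norm v) \<Longrightarrow> op_norm A \<le> c"
  unfolding op_norm_def by (rule onorm_le)

lemma Re_quad_form_le_op_norm: "Re (quad_form A v) \<le> op_norm A * (norm v)\<^sup>2"
proof -
  have "Re (quad_form A v) \<le> norm v * norm (A *v v)"
    unfolding Re_quad_form by (rule norm_cauchy_schwarz)
  also have "\<dots> \<le> norm v * (op_norm A * norm v)"
    by (simp add: mult_left_mono norm_matrix_vector_mult_le_op_norm)
  finally show ?thesis
    by (simp add: power2_eq_square mult_ac)
qed

lemma cmod_entry_le_op_norm: "cmod (A $ i $ j) \<le> op_norm A"
proof -
  have "cmod ((A *v axis j 1) $ i) \<le> norm (A *v axis j 1)"
    by (rule Finite_Cartesian_Product.norm_nth_le)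
  then have "cmod (A $ i $ j) \<le> norm (A *v axis j 1)"
    by (simp add: matrix_vector_mult_axis)
  also have "\<dots> \<le> op_norm A"
    using norm_matrix_vector_mult_le_op_norm[of A "axis j 1"] by (simp add: norm_Basis Basis_complex_def)
  finally show ?thesis .
qed

lemma norm_le_op_norm: "norm (A :: 'n::finite cmat) \<le> of_nat CARD('n) * (of_nat CARD('n) * op_norm A)"
proof -
  have "norm A \<le> (\<Sum>i\<in>UNIV. \<Sum>j\<in>UNIV. cmod (A $ i $ j))"
  proof -
    have norm_le_l1: "norm x \<le> (\<Sum>i\<in>UNIV. norm (x $ i))" for x :: "'a::real_normed_vector ^ 'n"
      by (simp add: norm_vec_def L2_set_le_sum)
    show ?thesis
      by (rule order_trans[OF norm_le_l1 sum_mono[OF norm_le_l1]])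
  qed
  also have "\<dots> \<le> (\<Sum>i\<in>(UNIV :: 'n set). \<Sum>j\<in>(UNIV :: 'n set). op_norm A)"
    by (intro sum_mono cmod_entry_le_op_norm)
  finally show ?thesis by simp
qed

text \<open>For Hermitian \<open>A\<close> the form \<open>Re \<langle>x, A y\<rangle>\<close> is symmetric, so polarisation bounds it
  by its values on the diagonal.\<close>
lemma psd_inner_bound:
  assumes "psd A" "0 \<le> c" and bound: "\<And>v. Re (quad_form A v) \<le> c * (norm v)\<^sup>2"
  shows "2 * inner x (A *v y) \<le> c * ((norm x)\<^sup>2 + (norm y)\<^sup>2)"
proof -
  define B where "B x y = inner x (A *v y)" for x y
  have B_sym: "B x y = B y x" for x y
  proof -
    have "B x y = inner (A *v x) y"
      unfolding B_def by (simp add: cinner_adj psd_hermitian[OF assms(1)] flip: Re_cinner)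
    then show ?thesis
      unfolding B_def by (simp add: inner_commute)
  qed
  have B_nonneg: "0 \<le> B v v" for v
    using assms(1) unfolding B_def psd_iff_quad_form Re_quad_form by blast
  have "4 * B x y = B (x + y) (x + y) - B (x - y) (x - y)"
    using B_sym[of x y] unfolding B_def
    by (simp add: algebra_simps inner_add_left inner_add_right inner_diff_left inner_diff_right)
  also have "\<dots> \<le> c * (norm (x + y))\<^sup>2"
    using bound[of "x + y"] B_nonneg[of "x - y"] unfolding B_def Re_quad_form by simp
  also have "\<dots> \<le> c * (2 * (norm x)\<^sup>2 + 2 * (norm y)\<^sup>2)"
  proof -
    have "(norm (x + y))\<^sup>2 \<le> (norm x + norm y)\<^sup>2"
      by (simp add: norm_triangle_ineq power_mono)
    also have "\<dots> \<le> 2 * (norm x)\<^sup>2 + 2 * (norm y)\<^sup>2"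
      using zero_le_power2[of "norm x - norm y"] by (simp add: power2_eq_square algebra_simps)
    finally show ?thesis
      using assms(2) by (rule mult_left_mono)
  qed
  finally show ?thesis
    unfolding B_def by (simp add: algebra_simps)
qed

lemma psd_op_norm_le:
  assumes "psd A" "0 \<le> c" "\<And>v. Re (quad_form A v) \<le> c * (norm v)\<^sup>2"
  shows "op_norm A \<le> c"
proof (rule op_norm_le)
  fix v
  show "norm (A *v v) \<le> c * norm v"
  proof (cases "A *v v = 0")
    case False
    define s where "s = norm v / norm (A *v v)"
    have "2 * inner (s *\<^sub>R (A *v v)) (A *v v) \<le> c * ((norm (s *\<^sub>R (A *v v)))\<^sup>2 + (norm v)\<^sup>2)"
      by (rule psd_inner_bound[OF assms])
    then have "2 * (norm v * norm (A *v v)) \<le> c * (2 * (norm v)\<^sup>2)"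
      using False by (simp add: s_def power2_norm_eq_inner[symmetric] power2_eq_square)
    then have "norm v * norm (A *v v) \<le> norm v * (c * norm v)"
      by (simp add: power2_eq_square mult_ac)
    moreover have "norm v > 0"
      using False by auto
    ultimately show ?thesis
      by (simp add: mult_le_cancel_left_pos)
  qed (simp add: assms(2))
qed

section \<open>Conjugation by \<open>V \<otimes> I\<close>\<close>

lemma quad_form_conj_tensor_id:
  "quad_form (conj_tensor_id V G) v = quad_form G (adj (kron V (mat 1)) *v v)"
  unfolding conj_tensor_id_def by (rule quad_form_congruence)

lemma psd_conj_tensor_id: "psd G \<Longrightarrow> psd (conj_tensor_id V G)"
  unfolding conj_tensor_id_def by (rule psd_congruence)

lemma conj_tensor_id_kron: "conj_tensor_id V (kron A (mat 1)) = kron (V ** A ** adj V) (mat 1)"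
  by (simp add: conj_tensor_id_def adj_kron kron_mult)

lemma conj_tensor_id_mult: "conj_tensor_id V (conj_tensor_id W G) = conj_tensor_id (V ** W) G"
proof -
  have kron_VW: "kron V (mat 1) ** kron W (mat 1) = kron (V ** W) (mat 1)"
    by (simp add: kron_mult)
  show ?thesis
    by (simp add: conj_tensor_id_def adj_matrix_mult matrix_mul_assoc flip: kron_VW)
qed

lemma kron_gram: "kron (V ** adj V) (mat 1) = kron V (mat 1) ** adj (kron V (mat 1))"
  by (simp add: adj_kron kron_mult)

lemma conj_tensor_id_mat_1: "conj_tensor_id (mat 1) G = G"
  by (simp add: conj_tensor_id_def kron_mat_1)

lemma loewner_le_conj_tensor_id:
  fixes G :: "('a::finite \<times> 'b::finite) cmat"
  assumes "psd G" "op_norm G \<le> t"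
  shows "loewner_le (conj_tensor_id V G) (t *\<^sub>R kron (V ** adj V) (mat 1))"
  unfolding loewner_le_def psd_iff_quad_form
proof
  fix v
  define u where "u = adj (kron V (mat 1 :: 'b cmat)) *v v"
  have "quad_form (t *\<^sub>R kron (V ** adj V) (mat 1 :: 'b cmat) - conj_tensor_id V G) v
      = of_real (t * (norm u)\<^sup>2) - quad_form G u"
    by (simp add: u_def kron_gram quad_form_diff quad_form_scaleR quad_form_conj_tensor_id
        quad_form_gram)
  moreover have "Im (quad_form G u) = 0" "0 \<le> Re (quad_form G u)"
    using assms(1) unfolding psd_iff_quad_form by auto
  moreover have "Re (quad_form G u) \<le> t * (norm u)\<^sup>2"
    using Re_quad_form_le_op_norm[of G u] assms(2) by (meson mult_right_mono order_trans zero_le_power2)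
  ultimately show "Im (quad_form (t *\<^sub>R kron (V ** adj V) (mat 1 :: 'b cmat) - conj_tensor_id V G) v) = 0 \<and>
      0 \<le> Re (quad_form (t *\<^sub>R kron (V ** adj V) (mat 1 :: 'b cmat) - conj_tensor_id V G) v)"
    by simp
qed

lemma op_norm_conj_tensor_id_inverse_le:
  assumes "psd \<rho>" "0 \<le> t" "Wi ** W = mat 1"
    and "loewner_le \<rho> (t *\<^sub>R kron (W ** adj W) (mat 1 :: 'b::finite cmat))"
  shows "op_norm (conj_tensor_id Wi \<rho>) \<le> t"
proof (rule psd_op_norm_le[OF psd_conj_tensor_id[OF assms(1)] assms(2)])
  fix v
  define u where "u = adj (kron Wi (mat 1 :: 'b cmat)) *v v"
  have "conj_tensor_id Wi (kron (W ** adj W) (mat 1 :: 'b cmat)) = mat 1"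
    using assms(3) by (simp add: conj_tensor_id_kron matrix_mul_assoc kron_mat_1
        flip: adj_matrix_mult)
  then have "quad_form (kron (W ** adj W) (mat 1 :: 'b cmat)) u = of_real ((norm v)\<^sup>2)"
    using quad_form_conj_tensor_id[of Wi "kron (W ** adj W) (mat 1)" v]
    by (simp add: u_def quad_form_mat_1)
  moreover have "0 \<le> Re (quad_form (t *\<^sub>R kron (W ** adj W) (mat 1 :: 'b cmat) - \<rho>) u)"
    using assms(4) unfolding loewner_le_def psd_iff_quad_form by blast
  ultimately show "Re (quad_form (conj_tensor_id Wi \<rho>) v) \<le> t * (norm v)\<^sup>2"
    by (simp add: quad_form_conj_tensor_id u_def quad_form_diff quad_form_scaleR)
qed

lemma perturbed_state_factorization:
  fixes \<sigma> :: "'a::finite cmat"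
  assumes "is_state \<sigma>" "0 < \<epsilon>"
  shows "\<exists>W. invertible W \<and> tr (W ** adj W) = 1 \<and>
           (1 + \<epsilon>) *\<^sub>R (W ** adj W) = \<sigma> + (\<epsilon> / real CARD('a)) *\<^sub>R mat 1"
proof -
  define d where "d = real CARD('a)"
  define P where "P = (1 / (1 + \<epsilon>)) *\<^sub>R (\<sigma> + (\<epsilon> / d) *\<^sub>R mat 1)"
  have d_pos: "0 < d"
    by (simp add: d_def)
  have psd_\<sigma>: "psd \<sigma>" and tr_\<sigma>: "tr \<sigma> = 1"
    using assms(1) unfolding is_state_def by auto
  have "adj P = P"
    by (simp add: P_def adj_scaleR adj_add psd_hermitian[OF psd_\<sigma>])
  moreover have "Re (quad_form P v) > 0" if "v \<noteq> 0" for v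
  proof -
    have "0 \<le> Re (quad_form \<sigma> v)"
      using psd_\<sigma> unfolding psd_iff_quad_form by blast
    moreover have "0 < \<epsilon> / d * (norm v)\<^sup>2"
      using that d_pos assms(2) by simp
    ultimately show ?thesis
      using assms(2) by (simp add: P_def quad_form_scaleR quad_form_add quad_form_mat_1)
  qed
  ultimately obtain W where "invertible W" and W_P: "W ** adj W = P"
    using pos_def_factorization by blast
  moreover have "tr P = of_real (1 / (1 + \<epsilon>) * (1 + \<epsilon> / d * d))"
    by (simp add: P_def tr_scaleR tr_add tr_mat_1 tr_\<sigma> d_def) (simp add: complex_eq_iff)
  then have "tr (W ** adj W) = 1"
    using d_pos assms(2) by (simp add: W_P)
  moreover have "(1 + \<epsilon>) *\<^sub>R (W ** adj W) = \<sigma> + (\<epsilon> / real CARD('a)) *\<^sub>R mat 1"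
    using assms(2) by (simp add: W_P P_def d_def)
  ultimately show ?thesis
    by blast
qed

lemma factorization_of_loewner_bound:
  fixes \<rho> :: "('a::finite \<times> 'b::finite) cmat" and \<sigma> :: "'a cmat"
  assumes "psd \<rho>" "is_state \<sigma>" "0 \<le> t" "loewner_le \<rho> (t *\<^sub>R kron \<sigma> (mat 1 :: 'b cmat))" "0 < \<epsilon>"
  shows "\<exists>V G. tr (V ** adj V) = 1 \<and> psd G \<and> \<rho> = conj_tensor_id V G \<and> op_norm G \<le> (1 + \<epsilon>) * t"
proof -
  define d where "d = real CARD('a)"
  obtain W where "invertible W" and tr_W: "tr (W ** adj W) = 1"
    and W: "(1 + \<epsilon>) *\<^sub>R (W ** adj W) = \<sigma> + (\<epsilon> / d) *\<^sub>R mat 1"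
    using perturbed_state_factorization[OF assms(2,5)] unfolding d_def by blast
  then obtain Wi where W_Wi: "W ** Wi = mat 1" and Wi_W: "Wi ** W = mat 1"
    unfolding invertible_def by blast
  have "((1 + \<epsilon>) * t) *\<^sub>R kron (W ** adj W) (mat 1 :: 'b cmat) - \<rho>
      = t *\<^sub>R kron ((1 + \<epsilon>) *\<^sub>R (W ** adj W)) (mat 1) - \<rho>"
    by (simp add: kron_scaleR_left)
  also have "\<dots> = (t *\<^sub>R kron \<sigma> (mat 1) - \<rho>) + (t * (\<epsilon> / d)) *\<^sub>R mat 1"
    by (simp add: W kron_add_left kron_scaleR_left kron_mat_1 scaleR_add_right)
  finally have eq: "((1 + \<epsilon>) * t) *\<^sub>R kron (W ** adj W) (mat 1 :: 'b cmat) - \<rho>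
      = (t *\<^sub>R kron \<sigma> (mat 1) - \<rho>) + (t * (\<epsilon> / d)) *\<^sub>R mat 1" .
  have "psd (t *\<^sub>R kron \<sigma> (mat 1 :: 'b cmat) - \<rho>)"
    using assms(4) unfolding loewner_le_def .
  then have "loewner_le \<rho> (((1 + \<epsilon>) * t) *\<^sub>R kron (W ** adj W) (mat 1 :: 'b cmat))"
    unfolding loewner_le_def eq using assms(3,5)
    by (intro psd_add psd_scaleR psd_mat_1) (auto simp: d_def)
  then have "op_norm (conj_tensor_id Wi \<rho>) \<le> (1 + \<epsilon>) * t"
    using assms(1,3,5) Wi_W by (intro op_norm_conj_tensor_id_inverse_le) auto
  moreover have "\<rho> = conj_tensor_id W (conj_tensor_id Wi \<rho>)"
    by (simp add: conj_tensor_id_mult W_Wi conj_tensor_id_mat_1)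
  ultimately show ?thesis
    using tr_W psd_conj_tensor_id[OF assms(1)] by blast
qed

section \<open>The conditional diamond norm\<close>

definition diamond_feasible :: "('a::finite \<times> 'b::finite) cmat \<Rightarrow> real \<Rightarrow> bool" where
  "diamond_feasible \<rho> t \<longleftrightarrow>
     0 < t \<and> (\<exists>\<sigma> :: 'a cmat. is_state \<sigma> \<and> loewner_le \<rho> (t *\<^sub>R kron \<sigma> (mat 1 :: 'b cmat)))"

lemma cond_diamond_norm_eq_Inf: "cond_diamond_norm \<rho> = Inf (Collect (diamond_feasible \<rho>))"
  unfolding cond_diamond_norm_def diamond_feasible_def ..

lemma bdd_below_diamond_feasible: "bdd_below (Collect (diamond_feasible \<rho>))"
  by (rule bdd_belowI[of _ 0]) (simp add: diamond_feasible_def)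

lemma cond_diamond_norm_le: "diamond_feasible \<rho> t \<Longrightarrow> cond_diamond_norm \<rho> \<le> t"
  unfolding cond_diamond_norm_eq_Inf by (simp add: cInf_lower bdd_below_diamond_feasible)

lemma diamond_feasible_factorization:
  assumes "tr (V ** adj V) = 1" "psd G" "op_norm G < t"
  shows "diamond_feasible (conj_tensor_id V G) t"
  unfolding diamond_feasible_def
proof (intro conjI exI)
  show "0 < t"
    using op_norm_nonneg[of G] assms(3) by linarith
  show "is_state (V ** adj V)"
    using assms(1) by (simp add: is_state_def psd_gram)
  show "loewner_le (conj_tensor_id V G) (t *\<^sub>R kron (V ** adj V) (mat 1))"
    using assms(2,3) by (simp add: loewner_le_conj_tensor_id)
qed

lemma cond_diamond_norm_le_op_norm:
  assumes "tr (V ** adj V) = 1" "psd G"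
  shows "cond_diamond_norm (conj_tensor_id V G) \<le> op_norm G"
proof (rule dense_ge)
  fix t
  assume "op_norm G < t"
  with assms show "cond_diamond_norm (conj_tensor_id V G) \<le> t"
    by (intro cond_diamond_norm_le diamond_feasible_factorization)
qed

lemma ex_diamond_feasible:
  fixes \<rho> :: "('a::finite \<times> 'b::finite) cmat"
  assumes "psd \<rho>"
  shows "\<exists>t. diamond_feasible \<rho> t"
proof -
  define d where "d = real CARD('a)"
  define V :: "'a cmat" where "V = (1 / sqrt d) *\<^sub>R mat 1"
  have d_pos: "0 < d"
    by (simp add: d_def)
  have "tr (V ** adj V) = 1"
    using d_pos by (simp add: V_def adj_scaleR matrix_scalar_ac tr_scaleR tr_mat_1 d_def
        flip: scalar_matrix_assoc)
  moreover have "psd (d *\<^sub>R \<rho>)"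
    using assms d_pos by (simp add: psd_scaleR)
  ultimately have "diamond_feasible (conj_tensor_id V (d *\<^sub>R \<rho>)) (op_norm (d *\<^sub>R \<rho>) + 1)"
    by (simp add: diamond_feasible_factorization)
  moreover have "conj_tensor_id V (d *\<^sub>R \<rho>) = \<rho>"
    using d_pos by (simp add: V_def conj_tensor_id_def kron_scaleR_left kron_mat_1 adj_scaleR
        matrix_scalar_ac flip: scalar_matrix_assoc)
  ultimately show ?thesis
    by auto
qed

lemma near_optimal_factorization:
  fixes \<rho> :: "('a::finite \<times> 'b::finite) cmat"
  assumes "psd \<rho>" "0 < \<epsilon>"
  shows "\<exists>V G. tr (V ** adj V) = 1 \<and> psd G \<and> \<rho> = conj_tensor_id V G \<and>
           op_norm G \<le> cond_diamond_norm \<rho> + \<epsilon>"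
proof -
  have "Inf (Collect (diamond_feasible \<rho>)) < cond_diamond_norm \<rho> + \<epsilon> / 2"
    using assms(2) by (simp add: cond_diamond_norm_eq_Inf)
  then obtain t where "diamond_feasible \<rho> t" and t_lt: "t < cond_diamond_norm \<rho> + \<epsilon> / 2"
    using cInf_lessD[of "Collect (diamond_feasible \<rho>)"] ex_diamond_feasible[OF assms(1)] by auto
  then obtain \<sigma> where t_pos: "0 < t" and \<sigma>: "is_state \<sigma>"
    and le: "loewner_le \<rho> (t *\<^sub>R kron \<sigma> (mat 1 :: 'b cmat))"
    unfolding diamond_feasible_def by blast
  have "0 < \<epsilon> / (2 * t)"
    using assms(2) t_pos by simp
  then obtain V G where V_G: "tr (V ** adj V) = 1" "psd G" "\<rho> = conj_tensor_id V G"
    and G_le: "op_norm G \<le> (1 + \<epsilon> / (2 * t)) * t"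
    using factorization_of_loewner_bound[OF assms(1) \<sigma> less_imp_le[OF t_pos] le] by blast
  have "(1 + \<epsilon> / (2 * t)) * t = t + \<epsilon> / 2"
    using t_pos by (simp add: distrib_right)
  then have "op_norm G \<le> cond_diamond_norm \<rho> + \<epsilon>"
    using G_le t_lt by linarith
  then show ?thesis
    using V_G by blast
qed

section \<open>Limits of factorisations\<close>

lemma tendsto_entry: "(A \<longlongrightarrow> a) F \<Longrightarrow> ((\<lambda>x. A x $ i $ j) \<longlongrightarrow> a $ i $ j) F"
  by (intro tendsto_vec_nth)

lemma tendsto_matrix_mult:
  fixes A :: "'x \<Rightarrow> complex ^ 'n::finite ^ 'm" and B :: "'x \<Rightarrow> complex ^ 'k ^ 'n"
  assumes "(A \<longlongrightarrow> a) F" "(B \<longlongrightarrow> b) F"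
  shows "((\<lambda>x. A x ** B x) \<longlongrightarrow> a ** b) F"
  unfolding matrix_matrix_mult_def using assms
  by (intro vec_tendstoI) (simp add: tendsto_sum tendsto_mult tendsto_entry)

lemma tendsto_matrix_vector_mult:
  fixes A :: "'x \<Rightarrow> complex ^ 'n::finite ^ 'm"
  assumes "(A \<longlongrightarrow> a) F"
  shows "((\<lambda>x. A x *v v) \<longlongrightarrow> a *v v) F"
  unfolding matrix_vector_mult_def using assms
  by (intro vec_tendstoI) (simp add: tendsto_sum tendsto_mult tendsto_entry)

lemma tendsto_adj:
  assumes "(A \<longlongrightarrow> a) F"
  shows "((\<lambda>x. adj (A x)) \<longlongrightarrow> adj a) F"
  unfolding adj_def using assms
  by (intro vec_tendstoI) (simp add: tendsto_cnj tendsto_entry)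

lemma tendsto_kron_left:
  assumes "(A \<longlongrightarrow> a) F"
  shows "((\<lambda>x. kron (A x) B) \<longlongrightarrow> kron a B) F"
  unfolding kron_def using assms
  by (intro vec_tendstoI) (simp add: tendsto_mult tendsto_entry)

lemma tendsto_conj_tensor_id:
  assumes "(V \<longlongrightarrow> v) F" "(G \<longlongrightarrow> g) F"
  shows "((\<lambda>x. conj_tensor_id (V x) (G x)) \<longlongrightarrow> conj_tensor_id v g) F"
  unfolding conj_tensor_id_def
  by (intro tendsto_matrix_mult tendsto_adj tendsto_kron_left assms)

lemma tendsto_tr:
  assumes "(A \<longlongrightarrow> a) F"
  shows "((\<lambda>x. tr (A x)) \<longlongrightarrow> tr a) F"
  unfolding tr_def using assms by (simp add: tendsto_sum tendsto_entry)

lemma tendsto_quad_form: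
  assumes "(A \<longlongrightarrow> a) F"
  shows "((\<lambda>x. quad_form (A x) v) \<longlongrightarrow> quad_form a v) F"
  unfolding quad_form_eq_sum using assms by (simp add: tendsto_sum tendsto_mult tendsto_entry)

lemma psd_limit:
  assumes "F \<noteq> bot" "(A \<longlongrightarrow> a) F" "eventually (\<lambda>x. psd (A x)) F"
  shows "psd a"
  unfolding psd_iff_quad_form
proof
  fix v
  have Im_ev: "eventually (\<lambda>x. Im (quad_form (A x) v) = 0) F"
    and Re_ev: "eventually (\<lambda>x. 0 \<le> Re (quad_form (A x) v)) F"
    using assms(3) by (simp_all add: psd_iff_quad_form eventually_mono)
  have Im_lim: "((\<lambda>x. Im (quad_form (A x) v)) \<longlongrightarrow> Im (quad_form a v)) F"
    and Re_lim: "((\<lambda>x. Re (quad_form (A x) v)) \<longlongrightarrow> Re (quad_form a v)) F"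
    using tendsto_quad_form[OF assms(2)] by (rule tendsto_Im, rule tendsto_Re)
  show "Im (quad_form a v) = 0 \<and> 0 \<le> Re (quad_form a v)"
    using tendsto_unique[OF assms(1) Im_lim tendsto_eventually[OF Im_ev]]
      tendsto_lowerbound[OF Re_lim Re_ev assms(1)] by simp
qed

lemma op_norm_limit_le:
  assumes "F \<noteq> bot" "(A \<longlongrightarrow> a) F" "(c \<longlongrightarrow> c0) F"
    and "eventually (\<lambda>x. op_norm (A x) \<le> c x) F"
  shows "op_norm a \<le> c0"
proof (rule op_norm_le)
  fix v
  have lim_norm: "((\<lambda>x. norm (A x *v v)) \<longlongrightarrow> norm (a *v v)) F"
    by (intro tendsto_norm tendsto_matrix_vector_mult assms(2))
  have lim_bound: "((\<lambda>x. c x * norm v) \<longlongrightarrow> c0 * norm v) F"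
    by (intro tendsto_mult assms(3) tendsto_const)
  have "eventually (\<lambda>x. norm (A x *v v) \<le> c x * norm v) F"
    using assms(4) by (rule eventually_mono)
      (rule order_trans[OF norm_matrix_vector_mult_le_op_norm], simp add: mult_right_mono)
  then show "norm (a *v v) \<le> c0 * norm v"
    by (rule tendsto_le[OF assms(1) lim_bound lim_norm])
qed

lemma factorization_tendsto:
  assumes "(V \<longlongrightarrow> v) F" "(G \<longlongrightarrow> g) F" "F \<noteq> bot"
    and "eventually (\<lambda>x. tr (V x ** adj (V x)) = 1 \<and> psd (G x) \<and> conj_tensor_id (V x) (G x) = \<rho>) F"
  shows "tr (v ** adj v) = 1 \<and> psd g \<and> conj_tensor_id v g = \<rho>"
proof (intro conjI)
  have "((\<lambda>x. tr (V x ** adj (V x))) \<longlongrightarrow> tr (v ** adj v)) F"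
    by (intro tendsto_tr tendsto_matrix_mult tendsto_adj assms(1))
  moreover have "((\<lambda>x. tr (V x ** adj (V x))) \<longlongrightarrow> 1) F"
    using assms(4) by (rule tendsto_eventually[OF eventually_mono]) simp
  ultimately show "tr (v ** adj v) = 1"
    by (rule tendsto_unique[OF assms(3)])
  show "psd g"
    by (rule psd_limit[OF assms(3,2) eventually_mono[OF assms(4)]]) simp
  have "((\<lambda>x. conj_tensor_id (V x) (G x)) \<longlongrightarrow> conj_tensor_id v g) F"
    by (intro tendsto_conj_tensor_id assms(1,2))
  moreover have "((\<lambda>x. conj_tensor_id (V x) (G x)) \<longlongrightarrow> \<rho>) F"
    using assms(4) by (rule tendsto_eventually[OF eventually_mono]) simp
  ultimately show "conj_tensor_id v g = \<rho>"
    by (rule tendsto_unique[OF assms(3)])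
qed

lemma bounded_factorizations:
  "bounded {(V :: 'a::finite cmat, G :: 'n::finite cmat). tr (V ** adj V) = 1 \<and> op_norm G \<le> c}"
  unfolding bounded_iff
proof (intro exI ballI)
  fix q :: "'a cmat \<times> 'n cmat"
  assume q: "q \<in> {(V, G). tr (V ** adj V) = 1 \<and> op_norm G \<le> c}"
  then have "of_real ((norm (fst q))\<^sup>2) = (1 :: complex)"
    using tr_gram[of "fst q"] by auto
  then have "norm (fst q) = 1"
    using norm_ge_zero[of "fst q"] by (auto simp: power2_eq_1_iff simp del: of_real_power)
  moreover have "norm (snd q) \<le> real CARD('n) * (real CARD('n) * c)"
    using q by (intro order_trans[OF norm_le_op_norm] mult_left_mono) auto
  ultimately show "norm q \<le> 1 + real CARD('n) * (real CARD('n) * c)"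
    using norm_Pair_le[of "fst q" "snd q"] by simp
qed

lemma factorization_limit:
  fixes \<rho> :: "('a::finite \<times> 'b::finite) cmat"
  assumes approx: "\<And>\<epsilon>. 0 < \<epsilon> \<Longrightarrow> \<exists>V G. tr (V ** adj V) = 1 \<and> psd G \<and>
      \<rho> = conj_tensor_id V G \<and> op_norm G \<le> c + \<epsilon>"
  shows "\<exists>V G. tr (V ** adj V) = 1 \<and> psd G \<and> \<rho> = conj_tensor_id V G \<and> op_norm G \<le> c"
proof -
  define e :: "nat \<Rightarrow> real" where "e n = inverse (real (Suc n))" for n
  define admissible :: "real \<Rightarrow> 'a cmat \<times> ('a \<times> 'b) cmat \<Rightarrow> bool" where
    "admissible \<epsilon> p \<longleftrightarrow> tr (fst p ** adj (fst p)) = 1 \<and> psd (snd p) \<and>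
       conj_tensor_id (fst p) (snd p) = \<rho> \<and> op_norm (snd p) \<le> c + \<epsilon>" for \<epsilon> p
  have "\<exists>p. admissible (e n) p" for n
  proof -
    obtain V G where "tr (V ** adj V) = 1" "psd G" "\<rho> = conj_tensor_id V G" "op_norm G \<le> c + e n"
      using approx[of "e n"] by (auto simp: e_def)
    then show ?thesis
      unfolding admissible_def by (intro exI[of _ "(V, G)"]) simp
  qed
  then obtain p where p: "\<forall>n. admissible (e n) (p n)"
    by (metis choice)
  have "tr (fst (p n) ** adj (fst (p n))) = 1 \<and> op_norm (snd (p n)) \<le> c + 1" for n
  proof -
    have "e n \<le> 1"
      by (simp add: e_def inverse_le_1_iff)
    then show ?thesis
      using p[rule_format, of n] unfolding admissible_def by auto
  qed
  then have "range p \<subseteq> {(V, G). tr (V ** adj V) = 1 \<and> op_norm G \<le> c + 1}"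
    by (auto simp: case_prod_unfold)
  then have "bounded (range p)"
    by (rule bounded_subset[OF bounded_factorizations])
  then obtain l r where "strict_mono r" and lim: "(p \<circ> r) \<longlonglongrightarrow> l"
    using bounded_imp_convergent_subsequence by blast
  have lim_V: "(\<lambda>n. fst (p (r n))) \<longlonglongrightarrow> fst l" and lim_G: "(\<lambda>n. snd (p (r n))) \<longlonglongrightarrow> snd l"
    using tendsto_fst[OF lim] tendsto_snd[OF lim] by (simp_all add: comp_def)
  have "tr (fst l ** adj (fst l)) = 1 \<and> psd (snd l) \<and> conj_tensor_id (fst l) (snd l) = \<rho>"
    using p by (intro factorization_tendsto[OF lim_V lim_G trivial_limit_sequentially])
      (simp add: admissible_def)
  moreover have "(\<lambda>n. c + e (r n)) \<longlonglongrightarrow> c + 0"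
    using LIMSEQ_subseq_LIMSEQ[OF LIMSEQ_inverse_real_of_nat \<open>strict_mono r\<close>]
    by (intro tendsto_add tendsto_const) (simp add: e_def comp_def)
  then have "op_norm (snd l) \<le> c"
    using p by (intro op_norm_limit_le[OF trivial_limit_sequentially lim_G]) (auto simp: admissible_def)
  ultimately show ?thesis
    by metis
qed

theorem lemma1:
  fixes \<rho> :: "('a::finite \<times> 'b::finite) cmat"
  assumes "psd \<rho>"
  shows "\<exists>(V :: 'a cmat) (G :: ('a \<times> 'b) cmat).
           tr (V ** adj V) = 1 \<and> psd G \<and>
           \<rho> = conj_tensor_id V G \<and> op_norm G = cond_diamond_norm \<rho>"
proof -
  have "\<exists>V G. tr (V ** adj V) = 1 \<and> psd G \<and> \<rho> = conj_tensor_id V G \<and>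
      op_norm G \<le> cond_diamond_norm \<rho>"
    by (rule factorization_limit[OF near_optimal_factorization[OF assms]])
  then obtain V G where V_G: "tr (V ** adj V) = 1" "psd G" "\<rho> = conj_tensor_id V G"
    and "op_norm G \<le> cond_diamond_norm \<rho>"
    by blast
  moreover have "cond_diamond_norm \<rho> \<le> op_norm G"
    unfolding V_G(3) using V_G(1,2) by (rule cond_diamond_norm_le_op_norm)
  ultimately show ?thesis
    by (intro exI[of _ V] exI[of _ G]) simp
qed

end
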